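(* Let $(\underline F_X,\overline F_X)$ and $(\underline F_Y,\overline F_Y)$ be $p$-boxes, $F_Z$ a distribution function, and let $F_X,F_Y$ be distribution functions with $\underline F_X\le F_X\le\overline F_X$, $\underline F_Y\le F_Y\le\overline F_Y$. Put $F=F_XF_Z$, $G=F_YF_Z$, $K=F_Y+F_Z-F_YF_Z$ and $\underline F=\underline F_XF_Z$, $\overline F=\overline F_XF_Z$, $\underline G=\underline F_YF_Z$, $\overline G=\overline F_YF_Z$, $\underline K=\underline F_Y+F_Z-\underline F_YF_Z$, $\overline K=\overline F_Y+F_Z-\overline F_YF_Z$. Let $\underline\phi,\underline\psi,\underline\chi$ be the pointwise infima of the functions $\phi$, $\psi$, $\chi$ (respectively) associated to $(\underline F_X,\underline F_Y,F_Z)$, and $\overline\phi,\overline\psi,\overline\chi$ the pointwise suprema of those associated to $(\overline F_X,\overline F_Y,F_Z)$. Then: (i) $\underline F\le F\le\overline F$, $\underline G\le G\le\overline G$, $\underline K\le K\le\overline K$; (ii) there exist $\phi,\psi,\chi:[0,1]\to[0,1]$ associated to $(F_X,F_Y,F_Z)$ (i.e. to $F$, $G$, $K$) with $\underline\phi\le\phi\le\overline\phi$, $\underline\psi\le\psi\le\overline\psi$, $\underline\chi\le\chi\le\overline\chi$.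
   Context: A distribution function is a non-decreasing map $\mathbb R\to[0,1]$ (no continuity assumed) with limits $0$ at $-\infty$ and $1$ at $+\infty$; a $p$-box is a pair of distribution functions $(\underline F,\overline F)$ with $\underline F\le\overline F$. For distribution functions $(A,B,C)$ (playing the roles of $F_X,F_Y,F_Z$): $\phi$ is associated if $\phi$ is non-decreasing, $\phi(0)=0$, $\phi(1)=1$, $\phi(u)/u$ non-increasing on $(0,1]$, and $\phi(A(x)C(x))=A(x)$ whenever $A(x)C(x)>0$; $\psi$ is associated if it satisfies the same conditions with $B$ in place of $A$; $\chi$ is associated if $\chi$ is non-decreasing, $\chi(0)=0$, $\chi(1)=1$, $\frac{1-\chi(w)}{w-\chi(w)}$ non-increasing on $[0,1]$ (values in $[1,\infty]$), and $\chi(B(y)+C(y)-B(y)C(y))=B(y)$ whenever $B(y)+C(y)-B(y)C(y)<1$. *)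

theory Defs
  imports Complex_Main "HOL-Library.Extended_Real"
begin

definition distribution_function :: "(real \<Rightarrow> real) \<Rightarrow> bool" where
  "distribution_function F \<longleftrightarrow>
     mono F \<and> (\<forall>x. 0 \<le> F x \<and> F x \<le> 1) \<and>
     (F \<longlongrightarrow> 0) at_bot \<and> (F \<longlongrightarrow> 1) at_top"

definition pbox :: "(real \<Rightarrow> real) \<Rightarrow> (real \<Rightarrow> real) \<Rightarrow> bool" where
  "pbox Fl Fu \<longleftrightarrow> distribution_function Fl \<and> distribution_function Fu \<and> (\<forall>x. Fl x \<le> Fu x)"

text \<open>phi associated to (A, _, C) (and psi associated to (_, B, C), with B for A):
  a map [0,1] -> [0,1], non-decreasing, phi 0 = 0, phi 1 = 1, phi u / u non-increasing
  on (0,1], and phi (A x * C x) = A x whenever A x * C x > 0.\<close>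
definition assoc_phi :: "(real \<Rightarrow> real) \<Rightarrow> (real \<Rightarrow> real) \<Rightarrow> (real \<Rightarrow> real) \<Rightarrow> bool" where
  "assoc_phi A C \<phi> \<longleftrightarrow>
     \<phi> ` {0..1} \<subseteq> {0..1} \<and>
     mono_on {0..1} \<phi> \<and> \<phi> 0 = 0 \<and> \<phi> 1 = 1 \<and>
     (\<forall>u\<in>{0<..1}. \<forall>v\<in>{0<..1}. u \<le> v \<longrightarrow> \<phi> v / v \<le> \<phi> u / u) \<and>
     (\<forall>x. A x * C x > 0 \<longrightarrow> \<phi> (A x * C x) = A x)"

text \<open>The quotient (1 - chi w)/(w - chi w) as an extended real: a zero denominator with
  positive numerator gives \<infinity>; the indeterminate 0/0 (which only happens at w = 1, where
  chi 1 = 1) is given the value 1, the least admissible value, so it imposes no constraint.\<close>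
definition chi_ratio :: "(real \<Rightarrow> real) \<Rightarrow> real \<Rightarrow> ereal" where
  "chi_ratio \<chi> w =
     (if w - \<chi> w = 0 then (if 1 - \<chi> w = 0 then 1 else \<infinity>)
      else ereal ((1 - \<chi> w) / (w - \<chi> w)))"

definition assoc_chi :: "(real \<Rightarrow> real) \<Rightarrow> (real \<Rightarrow> real) \<Rightarrow> (real \<Rightarrow> real) \<Rightarrow> bool" where
  "assoc_chi B C \<chi> \<longleftrightarrow>
     \<chi> ` {0..1} \<subseteq> {0..1} \<and>
     mono_on {0..1} \<chi> \<and> \<chi> 0 = 0 \<and> \<chi> 1 = 1 \<and>
     (\<forall>w\<in>{0..1}. 1 \<le> chi_ratio \<chi> w) \<and>
     (\<forall>u\<in>{0..1}. \<forall>v\<in>{0..1}. u \<le> v \<longrightarrow> chi_ratio \<chi> v \<le> chi_ratio \<chi> u) \<and>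
     (\<forall>y. B y + C y - B y * C y < 1 \<longrightarrow> \<chi> (B y + C y - B y * C y) = B y)"

end

theory Submission
  imports Defs
begin

text \<open>Part (i) holds because a * c and a + c - a * c are non-decreasing in a when 0 \<le> c \<le> 1.
  For part (ii) it is enough to choose associated functions monotonically in the first argument.
  For comonotone A, C with values in [0,1] the function
  \<open>canonical_phi A C u = sup ({u} \<union> {min (A x) (u / C x) | A x * C x > 0})\<close>
  is associated to (A, C): every member of the supremum is non-decreasing with non-increasing
  quotient by u, and comonotonicity gives the value A x at A x * C x. It grows with A, so the
  infimum over the functions associated to the lower bound lies below
  \<open>canonical_phi lFX FZ \<le> canonical_phi FX FZ\<close>, and dually for the supremum.
  Since 1 - K = (1 - FY) (1 - FZ), reflecting \<open>\<phi>\<close> to \<open>w \<mapsto> 1 - \<phi> (1 - w)\<close> turns a function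
  associated to (1 - FY, 1 - FZ) as a \<open>\<phi>\<close> into one associated to (FY, FZ) as a \<open>\<chi>\<close>.\<close>

definition unit_comonotone :: "('a \<Rightarrow> real) \<Rightarrow> ('a \<Rightarrow> real) \<Rightarrow> bool" where
  "unit_comonotone A C \<longleftrightarrow> (\<forall>x. A x \<in> {0..1} \<and> C x \<in> {0..1}) \<and>
     (\<forall>x y. (A x \<le> A y \<and> C x \<le> C y) \<or> (A y \<le> A x \<and> C y \<le> C x))"

lemma unit_comonotone_distribution_function:
  "distribution_function A \<Longrightarrow> distribution_function C \<Longrightarrow> unit_comonotone A C"
  unfolding distribution_function_def unit_comonotone_def by (metis atLeastAtMost_iff linear monoD)

lemma unit_comonotone_complement:
  "unit_comonotone A C \<Longrightarrow> unit_comonotone (\<lambda>x. 1 - A x) (\<lambda>x. 1 - C x)"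
  unfolding unit_comonotone_def by (simp add: disj_commute)

lemma unit_comonotone_mult_pos:
  assumes "unit_comonotone A C" "A x * C x > 0"
  shows "A x > 0" "C x > 0"
proof -
  have "0 \<le> A x" "0 \<le> C x" using assms(1) unfolding unit_comonotone_def by auto
  then show "A x > 0" "C x > 0" using assms(2) by (auto simp: zero_less_mult_iff)
qed

definition canonical_phi :: "('a \<Rightarrow> real) \<Rightarrow> ('a \<Rightarrow> real) \<Rightarrow> real \<Rightarrow> real" where
  "canonical_phi A C u = Sup (insert u ((\<lambda>x. min (A x) (u / C x)) ` {x. A x * C x > 0}))"

lemma bdd_above_canonical_phi:
  "unit_comonotone A C \<Longrightarrow> bdd_above (insert u ((\<lambda>x. min (A x) (u / C x)) ` {x. A x * C x > 0}))"
  unfolding unit_comonotone_def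
  by (intro bdd_aboveI[of _ "max u 1"]) (auto simp: min_le_iff_disj le_max_iff_disj)

lemma canonical_phi_ge:
  "unit_comonotone A C \<Longrightarrow> u \<le> canonical_phi A C u"
  unfolding canonical_phi_def by (rule cSup_upper) (auto dest: bdd_above_canonical_phi)

lemma canonical_phi_upper:
  "unit_comonotone A C \<Longrightarrow> A x * C x > 0 \<Longrightarrow> min (A x) (u / C x) \<le> canonical_phi A C u"
  unfolding canonical_phi_def by (rule cSup_upper) (auto dest: bdd_above_canonical_phi)

lemma canonical_phi_least:
  "u \<le> b \<Longrightarrow> (\<And>x. A x * C x > 0 \<Longrightarrow> min (A x) (u / C x) \<le> b) \<Longrightarrow> canonical_phi A C u \<le> b"
  unfolding canonical_phi_def by (rule cSup_least) auto

lemma canonical_phi_le_one: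
  "unit_comonotone A C \<Longrightarrow> u \<le> 1 \<Longrightarrow> canonical_phi A C u \<le> 1"
  unfolding unit_comonotone_def by (rule canonical_phi_least) (auto simp: min_le_iff_disj)

lemma canonical_phi_zero: "unit_comonotone A C \<Longrightarrow> canonical_phi A C 0 = 0"
  by (intro order_antisym canonical_phi_least canonical_phi_ge) auto

lemma canonical_phi_one: "unit_comonotone A C \<Longrightarrow> canonical_phi A C 1 = 1"
  by (intro order_antisym canonical_phi_le_one canonical_phi_ge) auto

lemma canonical_phi_mono:
  assumes AC: "unit_comonotone A C" and "u \<le> v"
  shows "canonical_phi A C u \<le> canonical_phi A C v"
proof (rule canonical_phi_least)
  show "u \<le> canonical_phi A C v" using canonical_phi_ge[OF AC, of v] \<open>u \<le> v\<close> by linarith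
  fix x assume pos: "A x * C x > 0"
  have "u / C x \<le> v / C x"
    using unit_comonotone_mult_pos[OF AC pos] \<open>u \<le> v\<close> by (simp add: divide_right_mono)
  then have "min (A x) (u / C x) \<le> min (A x) (v / C x)" by (simp add: min.mono)
  also have "\<dots> \<le> canonical_phi A C v" using canonical_phi_upper[OF AC pos] .
  finally show "min (A x) (u / C x) \<le> canonical_phi A C v" .
qed

lemma canonical_phi_mono_left:
  assumes A'C: "unit_comonotone A' C" and AA': "\<And>x. A x \<le> A' x"
  shows "canonical_phi A C u \<le> canonical_phi A' C u"
proof (rule canonical_phi_least)
  show "u \<le> canonical_phi A' C u" using canonical_phi_ge[OF A'C] .
  fix x assume "A x * C x > 0"
  moreover have "0 \<le> C x" using A'C unfolding unit_comonotone_def by simp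
  ultimately have "0 < A x" "0 < C x" by (auto simp: zero_less_mult_iff)
  then have pos: "A' x * C x > 0" using AA'[of x] by (intro mult_pos_pos) auto
  have "min (A x) (u / C x) \<le> min (A' x) (u / C x)" by (intro min.mono AA' order_refl)
  also have "\<dots> \<le> canonical_phi A' C u" using canonical_phi_upper[OF A'C pos] .
  finally show "min (A x) (u / C x) \<le> canonical_phi A' C u" .
qed

lemma canonical_phi_ratio:
  assumes AC: "unit_comonotone A C" and "0 < u" "u \<le> v"
  shows "canonical_phi A C v / v \<le> canonical_phi A C u / u"
proof -
  define r where "r = v / u"
  have r: "1 \<le> r" "r * u = v" using assms by (simp_all add: r_def)
  have "canonical_phi A C v \<le> r * canonical_phi A C u"
  proof (rule canonical_phi_least)
    have "r * u \<le> r * canonical_phi A C u" using canonical_phi_ge[OF AC, of u] r(1) by simp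
    then show "v \<le> r * canonical_phi A C u" using r(2) by simp
    fix x assume pos: "A x * C x > 0"
    have "A x \<le> r * A x" using unit_comonotone_mult_pos[OF AC pos] r(1) by simp
    moreover have "v / C x = r * (u / C x)" using r(2) by simp
    ultimately have "min (A x) (v / C x) \<le> min (r * A x) (r * (u / C x))"
      by (metis min.mono order_refl)
    also have "\<dots> = r * min (A x) (u / C x)" using r(1) by (simp add: min_mult_distrib_left)
    also have "\<dots> \<le> r * canonical_phi A C u" using canonical_phi_upper[OF AC pos] r(1) by simp
    finally show "min (A x) (v / C x) \<le> r * canonical_phi A C u" .
  qed
  then show ?thesis using assms by (simp add: r_def divide_le_eq mult.commute)
qed

lemma canonical_phi_at_product:
  assumes AC: "unit_comonotone A C" and pos: "A y * C y > 0"
  shows "canonical_phi A C (A y * C y) = A y"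
proof (rule order_antisym)
  have Cy: "C y > 0" using unit_comonotone_mult_pos[OF AC pos] by simp
  show "canonical_phi A C (A y * C y) \<le> A y"
  proof (rule canonical_phi_least)
    show "A y * C y \<le> A y" using AC unfolding unit_comonotone_def by (simp add: mult_left_le)
    fix x assume "A x * C x > 0"
    then have Cx: "C x > 0" using unit_comonotone_mult_pos[OF AC] by blast
    consider "A x \<le> A y" | "A y \<le> A x" "C y \<le> C x"
      using AC unfolding unit_comonotone_def by blast
    then show "min (A x) (A y * C y / C x) \<le> A y"
    proof cases
      case 2
      then have "A y * C y \<le> A y * C x"
        using AC unfolding unit_comonotone_def by (simp add: mult_left_mono)
      then show ?thesis using Cx by (simp add: min.coboundedI2 divide_le_eq)
    qed simp
  qed
  show "A y \<le> canonical_phi A C (A y * C y)"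
    using canonical_phi_upper[OF AC pos, of "A y * C y"] Cy by simp
qed

lemma assoc_phi_canonical_phi:
  assumes AC: "unit_comonotone A C"
  shows "assoc_phi A C (canonical_phi A C)"
  unfolding assoc_phi_def
proof (intro conjI ballI allI impI)
  show "canonical_phi A C ` {0..1} \<subseteq> {0..1}"
  proof (rule image_subsetI)
    fix u :: real assume "u \<in> {0..1}"
    then show "canonical_phi A C u \<in> {0..1}"
      using canonical_phi_ge[OF AC, of u] canonical_phi_le_one[OF AC, of u] by auto
  qed
  show "mono_on {0..1} (canonical_phi A C)" by (rule mono_onI) (rule canonical_phi_mono[OF AC])
  show "canonical_phi A C 0 = 0" "canonical_phi A C 1 = 1"
    using canonical_phi_zero[OF AC] canonical_phi_one[OF AC] .
  fix u v :: real assume "u \<in> {0<..1}" "v \<in> {0<..1}" "u \<le> v"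
  then show "canonical_phi A C v / v \<le> canonical_phi A C u / u"
    using canonical_phi_ratio[OF AC] by simp
next
  fix x assume "A x * C x > 0"
  then show "canonical_phi A C (A x * C x) = A x" by (rule canonical_phi_at_product[OF AC])
qed

lemma assoc_phi_ratio_antimono:
  "assoc_phi A C \<phi> \<Longrightarrow> 0 < s \<Longrightarrow> s \<le> t \<Longrightarrow> t \<le> 1 \<Longrightarrow> \<phi> t / t \<le> \<phi> s / s"
  unfolding assoc_phi_def by auto

lemma assoc_phi_ge_id:
  assumes \<phi>: "assoc_phi A C \<phi>" and s: "s \<in> {0..1}"
  shows "s \<le> \<phi> s"
proof (cases "s = 0")
  case False
  with s have "0 < s" by simp
  moreover have "\<phi> 1 / 1 \<le> \<phi> s / s"
    using assoc_phi_ratio_antimono[OF \<phi> \<open>0 < s\<close>, of 1] s by simp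
  moreover have "\<phi> 1 = 1" using \<phi> by (simp add: assoc_phi_def)
  ultimately show ?thesis by (simp add: le_divide_eq)
qed (use \<phi> in \<open>auto simp: assoc_phi_def\<close>)

lemma chi_ratio_reflect:
  "chi_ratio (\<lambda>w. 1 - \<phi> (1 - w)) (1 - s) =
     (if \<phi> s = s then (if \<phi> s = 0 then 1 else \<infinity>) else ereal (\<phi> s / (\<phi> s - s)))"
  unfolding chi_ratio_def by auto

text \<open>With \<open>\<rho> = \<phi> s / s\<close>, the quotient \<open>\<phi> s / (\<phi> s - s) = \<rho> / (\<rho> - 1)\<close> is a decreasing
  function of \<open>\<rho> \<ge> 1\<close>, and \<open>\<rho>\<close> is non-increasing in s.\<close>

lemma chi_ratio_reflect_mono:
  assumes \<phi>: "assoc_phi A C \<phi>" and st: "0 \<le> s" "s \<le> t" "t \<le> 1"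
  shows "chi_ratio (\<lambda>w. 1 - \<phi> (1 - w)) (1 - s) \<le> chi_ratio (\<lambda>w. 1 - \<phi> (1 - w)) (1 - t)"
proof (cases "s = 0")
  case True
  show ?thesis unfolding chi_ratio_reflect[of \<phi>]
    using True assoc_phi_ge_id[OF \<phi>, of t] \<phi> st by (auto simp: assoc_phi_def le_divide_eq)
next
  case False
  then have "0 < s" using st by simp
  have ge: "s \<le> \<phi> s" "t \<le> \<phi> t" using assoc_phi_ge_id[OF \<phi>] st by auto
  have cross: "\<phi> t * s \<le> \<phi> s * t"
    using assoc_phi_ratio_antimono[OF \<phi> \<open>0 < s\<close> st(2,3)] \<open>0 < s\<close> st by (simp add: field_simps)
  show ?thesis
  proof (cases "\<phi> t = t")
    case False
    with ge have "t < \<phi> t" by simp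
    have "s < \<phi> s"
    proof (rule ccontr)
      assume "\<not> s < \<phi> s"
      with ge cross have "\<phi> t * s \<le> t * s" by (simp add: mult.commute)
      with \<open>0 < s\<close> \<open>t < \<phi> t\<close> show False by simp
    qed
    have "\<phi> s * (\<phi> t - t) \<le> \<phi> t * (\<phi> s - s)" using cross by (simp add: algebra_simps)
    then have "\<phi> s / (\<phi> s - s) \<le> \<phi> t / (\<phi> t - t)"
      using \<open>s < \<phi> s\<close> \<open>t < \<phi> t\<close> by (simp add: field_simps)
    then show ?thesis using \<open>s < \<phi> s\<close> \<open>t < \<phi> t\<close> by (auto simp: chi_ratio_reflect)
  qed (use \<open>0 < s\<close> st in \<open>auto simp: chi_ratio_reflect\<close>)
qed

lemma assoc_chi_reflect:
  assumes \<phi>: "assoc_phi (\<lambda>y. 1 - B y) (\<lambda>y. 1 - C y) \<phi>"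
  shows "assoc_chi B C (\<lambda>w. 1 - \<phi> (1 - w))"
  unfolding assoc_chi_def
proof (intro conjI ballI allI impI)
  have range: "\<phi> ` {0..1} \<subseteq> {0..1}" and mono: "mono_on {0..1} \<phi>"
    and "\<phi> 0 = 0" "\<phi> 1 = 1" using \<phi> unfolding assoc_phi_def by auto
  show "(\<lambda>w. 1 - \<phi> (1 - w)) ` {0..1} \<subseteq> {0..1}" using range by (auto simp: image_subset_iff)
  show "1 - \<phi> (1 - 0) = 0" "1 - \<phi> (1 - 1) = 1" by (simp_all add: \<open>\<phi> 0 = 0\<close> \<open>\<phi> 1 = 1\<close>)
  show "mono_on {0..1} (\<lambda>w. 1 - \<phi> (1 - w))"
    by (rule mono_onI) (use mono in \<open>auto simp: mono_on_def\<close>)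
  fix u v :: real assume "u \<in> {0..1}" "v \<in> {0..1}" "u \<le> v"
  then show "chi_ratio (\<lambda>w. 1 - \<phi> (1 - w)) v \<le> chi_ratio (\<lambda>w. 1 - \<phi> (1 - w)) u"
    using chi_ratio_reflect_mono[OF \<phi>, of "1 - v" "1 - u"] by simp
next
  fix w :: real assume "w \<in> {0..1}"
  then have "chi_ratio (\<lambda>w. 1 - \<phi> (1 - w)) (1 - 0)
      \<le> chi_ratio (\<lambda>w. 1 - \<phi> (1 - w)) (1 - (1 - w))"
    by (intro chi_ratio_reflect_mono[OF \<phi>]) auto
  moreover have "\<phi> 0 = 0" using \<phi> unfolding assoc_phi_def by auto
  ultimately show "1 \<le> chi_ratio (\<lambda>w. 1 - \<phi> (1 - w)) w" by (simp add: chi_ratio_def)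
next
  fix y assume "B y + C y - B y * C y < 1"
  moreover have "1 - (B y + C y - B y * C y) = (1 - B y) * (1 - C y)" by (simp add: algebra_simps)
  ultimately show "1 - \<phi> (1 - (B y + C y - B y * C y)) = B y"
    using \<phi> unfolding assoc_phi_def by auto
qed

definition canonical_chi :: "('a \<Rightarrow> real) \<Rightarrow> ('a \<Rightarrow> real) \<Rightarrow> real \<Rightarrow> real" where
  "canonical_chi B C w = 1 - canonical_phi (\<lambda>y. 1 - B y) (\<lambda>y. 1 - C y) (1 - w)"

lemma assoc_chi_canonical_chi:
  "unit_comonotone B C \<Longrightarrow> assoc_chi B C (canonical_chi B C)"
  unfolding canonical_chi_def[abs_def]
  by (intro assoc_chi_reflect assoc_phi_canonical_phi unit_comonotone_complement)

lemma canonical_chi_mono_left: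
  "unit_comonotone B C \<Longrightarrow> (\<And>y. B y \<le> B' y) \<Longrightarrow> canonical_chi B C w \<le> canonical_chi B' C w"
  unfolding canonical_chi_def
  by (simp add: canonical_phi_mono_left unit_comonotone_complement)

lemma prob_sum_mono_left:
  fixes a b c :: real
  assumes "a \<le> b" "c \<le> 1"
  shows "a + c - a * c \<le> b + c - b * c"
  using mult_right_mono[OF assms(1), of "1 - c"] assms(2) by (simp add: algebra_simps)

lemma INF_le_le_SUP_unit_valued:
  fixes F :: "(real \<Rightarrow> real) set"
  assumes "\<phi> \<in> F" "\<forall>f\<in>F. f ` {0..1} \<subseteq> {0..1}" "u \<in> {0..1}"
  shows "(INF f\<in>F. f u) \<le> \<phi> u" "\<phi> u \<le> (SUP f\<in>F. f u)"
proof -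
  have bounds: "\<forall>f\<in>F. 0 \<le> f u \<and> f u \<le> 1" using assms(2,3) by (auto simp: image_subset_iff)
  show "(INF f\<in>F. f u) \<le> \<phi> u"
    using assms(1) bounds by (intro cINF_lower bdd_belowI[of _ 0]) auto
  show "\<phi> u \<le> (SUP f\<in>F. f u)"
    using assms(1) bounds by (intro cSUP_upper bdd_aboveI[of _ 1]) auto
qed

lemma canonical_phi_between_INF_SUP:
  assumes L: "unit_comonotone L C" and A: "unit_comonotone A C" and U: "unit_comonotone U C"
    and LAU: "\<And>x. L x \<le> A x" "\<And>x. A x \<le> U x" and u: "u \<in> {0..1}"
  shows "(INF f\<in>{f. assoc_phi L C f}. f u) \<le> canonical_phi A C u"
    and "canonical_phi A C u \<le> (SUP f\<in>{f. assoc_phi U C f}. f u)"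
proof -
  have unit_valued: "\<forall>f\<in>{f. assoc_phi B C f}. f ` {0..1} \<subseteq> {0..1}" for B
    by (simp add: assoc_phi_def)
  have "(INF f\<in>{f. assoc_phi L C f}. f u) \<le> canonical_phi L C u"
    using INF_le_le_SUP_unit_valued(1)[OF _ unit_valued u] assoc_phi_canonical_phi[OF L] by simp
  also have "\<dots> \<le> canonical_phi A C u" using canonical_phi_mono_left LAU(1) A by blast
  finally show "(INF f\<in>{f. assoc_phi L C f}. f u) \<le> canonical_phi A C u" .
  have "canonical_phi A C u \<le> canonical_phi U C u" using canonical_phi_mono_left LAU(2) U by blast
  also have "\<dots> \<le> (SUP f\<in>{f. assoc_phi U C f}. f u)"
    using INF_le_le_SUP_unit_valued(2)[OF _ unit_valued u] assoc_phi_canonical_phi[OF U] by simp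
  finally show "canonical_phi A C u \<le> (SUP f\<in>{f. assoc_phi U C f}. f u)" .
qed

lemma canonical_chi_between_INF_SUP:
  assumes L: "unit_comonotone L C" and A: "unit_comonotone A C" and U: "unit_comonotone U C"
    and LAU: "\<And>x. L x \<le> A x" "\<And>x. A x \<le> U x" and u: "u \<in> {0..1}"
  shows "(INF f\<in>{f. assoc_chi L C f}. f u) \<le> canonical_chi A C u"
    and "canonical_chi A C u \<le> (SUP f\<in>{f. assoc_chi U C f}. f u)"
proof -
  have unit_valued: "\<forall>f\<in>{f. assoc_chi B C f}. f ` {0..1} \<subseteq> {0..1}" for B
    by (simp add: assoc_chi_def)
  have "(INF f\<in>{f. assoc_chi L C f}. f u) \<le> canonical_chi L C u"
    using INF_le_le_SUP_unit_valued(1)[OF _ unit_valued u] assoc_chi_canonical_chi[OF L] by simp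
  also have "\<dots> \<le> canonical_chi A C u" using canonical_chi_mono_left L LAU(1) by blast
  finally show "(INF f\<in>{f. assoc_chi L C f}. f u) \<le> canonical_chi A C u" .
  have "canonical_chi A C u \<le> canonical_chi U C u" using canonical_chi_mono_left A LAU(2) by blast
  also have "\<dots> \<le> (SUP f\<in>{f. assoc_chi U C f}. f u)"
    using INF_le_le_SUP_unit_valued(2)[OF _ unit_valued u] assoc_chi_canonical_chi[OF U] by simp
  finally show "canonical_chi A C u \<le> (SUP f\<in>{f. assoc_chi U C f}. f u)" .
qed

theorem proposition5:
  fixes lFX uFX lFY uFY FZ FX FY :: "real \<Rightarrow> real"
  assumes "pbox lFX uFX" and "pbox lFY uFY"
    and "distribution_function FZ"
    and "distribution_function FX" and "distribution_function FY"
    and "\<forall>x. lFX x \<le> FX x \<and> FX x \<le> uFX x"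
    and "\<forall>x. lFY x \<le> FY x \<and> FY x \<le> uFY x"
  shows
    "((\<forall>x. lFX x * FZ x \<le> FX x * FZ x \<and> FX x * FZ x \<le> uFX x * FZ x) \<and>
     (\<forall>x. lFY x * FZ x \<le> FY x * FZ x \<and> FY x * FZ x \<le> uFY x * FZ x) \<and>
     (\<forall>x. lFY x + FZ x - lFY x * FZ x \<le> FY x + FZ x - FY x * FZ x \<and>
          FY x + FZ x - FY x * FZ x \<le> uFY x + FZ x - uFY x * FZ x)) \<and>
    (\<exists>\<phi> \<psi> \<chi>. assoc_phi FX FZ \<phi> \<and> assoc_phi FY FZ \<psi> \<and> assoc_chi FY FZ \<chi> \<and>
       (\<forall>u\<in>{0..1}.
          (INF f\<in>{f. assoc_phi lFX FZ f}. f u) \<le> \<phi> u \<and> \<phi> u \<le> (SUP f\<in>{f. assoc_phi uFX FZ f}. f u) \<and>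
          (INF f\<in>{f. assoc_phi lFY FZ f}. f u) \<le> \<psi> u \<and> \<psi> u \<le> (SUP f\<in>{f. assoc_phi uFY FZ f}. f u) \<and>
          (INF f\<in>{f. assoc_chi lFY FZ f}. f u) \<le> \<chi> u \<and> \<chi> u \<le> (SUP f\<in>{f. assoc_chi uFY FZ f}. f u)))"
proof -
  have FZ: "0 \<le> FZ x" "FZ x \<le> 1" for x using assms(3) by (simp_all add: distribution_function_def)
  have uc: "unit_comonotone F FZ" if "distribution_function F" for F
    using that assms(3) by (rule unit_comonotone_distribution_function)
  have X: "unit_comonotone lFX FZ" "unit_comonotone FX FZ" "unit_comonotone uFX FZ"
    and Y: "unit_comonotone lFY FZ" "unit_comonotone FY FZ" "unit_comonotone uFY FZ"
    using assms(1,2,4,5) by (auto simp: pbox_def intro: uc)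
  have "\<forall>x. lFX x * FZ x \<le> FX x * FZ x \<and> FX x * FZ x \<le> uFX x * FZ x"
    "\<forall>x. lFY x * FZ x \<le> FY x * FZ x \<and> FY x * FZ x \<le> uFY x * FZ x"
    "\<forall>x. lFY x + FZ x - lFY x * FZ x \<le> FY x + FZ x - FY x * FZ x \<and>
         FY x + FZ x - FY x * FZ x \<le> uFY x + FZ x - uFY x * FZ x"
    using assms(6,7) FZ by (intro allI conjI mult_right_mono prob_sum_mono_left; simp)+
  moreover have "assoc_phi FX FZ (canonical_phi FX FZ)" "assoc_phi FY FZ (canonical_phi FY FZ)"
    "assoc_chi FY FZ (canonical_chi FY FZ)"
    using X Y by (simp_all add: assoc_phi_canonical_phi assoc_chi_canonical_chi)
  moreover note canonical_phi_between_INF_SUP[OF X] canonical_phi_between_INF_SUP[OF Y]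
    canonical_chi_between_INF_SUP[OF Y]
  ultimately show ?thesis using assms(6,7) by blast
qed

end
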